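(* Let $\Sigma\subseteq\mathbb{C}$ be a finite set, let $b_m\in\Sigma^{\mathbb{Z}}$ for all $m\in\mathbb{N}$, and let $b_m\to b$ pointwise (so $b\in\Sigma^{\mathbb{Z}}$). Assume moreover that for every $N\in\mathbb{N}$, $g(N):=\sup_{m\in\mathbb{N}}\operatorname{gap}(N,b_m)<\infty$. Then for every $N\in\mathbb{N}$ there is $m_0$ such that $\mathcal{W}_N(b_m)\subseteq\mathcal{W}_N(b)$ for all $m\ge m_0$.
   Context: For $u\in\Sigma^{\mathbb{Z}}$ and $N\in\mathbb{N}$, $\mathcal{W}_N(u)$ is the set of words $(u(k),\dots,u(k+N-1))\in\Sigma^N$, $k\in\mathbb{Z}$. For $w\in\mathcal{W}_N(u)$: $\operatorname{pos}(w,u):=\{k\in\mathbb{Z}:(u(k),\dots,u(k+N-1))=w\}$, $\operatorname{gap}(w,u):=\min\{r\in\mathbb{N}:\operatorname{pos}(w,u)+\{-r,\dots,r\}=\mathbb{Z}\}$ (with $\min\emptyset=\infty$), and $\operatorname{gap}(N,u):=\max\{\operatorname{gap}(w,u):w\in\mathcal{W}_N(u)\}$. *)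

theory Defs
  imports Complex_Main "HOL-Library.Extended_Nat"
begin

definition word_at :: "(int \<Rightarrow> 'a) \<Rightarrow> nat \<Rightarrow> int \<Rightarrow> 'a list" where
  "word_at u N k = map (\<lambda>i. u (k + int i)) [0..<N]"

definition words :: "nat \<Rightarrow> (int \<Rightarrow> 'a) \<Rightarrow> 'a list set" where
  "words N u = {word_at u N k | k. True}"

definition pos :: "'a list \<Rightarrow> (int \<Rightarrow> 'a) \<Rightarrow> int set" where
  "pos w u = {k. word_at u (length w) k = w}"

text \<open>gap(w,u) = min { r in N : pos(w,u) + {-r..r} = Z }, with min of empty set = infinity.\<close>
definition gap_word :: "'a list \<Rightarrow> (int \<Rightarrow> 'a) \<Rightarrow> enat" where
  "gap_word w u = (INF r \<in> {r::nat. {k + j | k j. k \<in> pos w u \<and> j \<in> {- int r .. int r}} = UNIV}. enat r)"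

definition gap :: "nat \<Rightarrow> (int \<Rightarrow> 'a) \<Rightarrow> enat" where
  "gap N u = (SUP w \<in> words N u. gap_word w u)"

end

theory Submission
  imports Defs
begin

text \<open>Since the alphabet is finite, pointwise convergence means that each coordinate is eventually
  constant, so on any finite window the sequences eventually agree with the limit. A bound g on the
  gaps forces every length-N word of b m to occur at some position in [-g, g], that is, inside the
  fixed window [-g, g + N]; once b m agrees with the limit there, the word occurs in the limit too.\<close>

lemma eventually_eq_lim_finite_range:
  fixes f :: "nat \<Rightarrow> 'a::t1_space"
  assumes "finite A" "\<And>m. f m \<in> A" "f \<longlonglongrightarrow> L"
  shows "eventually (\<lambda>m. f m = L) sequentially"
proof -
  have "open (- (A - {L}))"
    using assms(1) by (intro open_Compl finite_imp_closed) simp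
  then have "eventually (\<lambda>m. f m \<in> - (A - {L})) sequentially"
    using assms(3) topological_tendstoD by blast
  then show ?thesis
    by eventually_elim (use assms(2) in auto)
qed

lemma eventually_agree_on_finite:
  fixes u :: "nat \<Rightarrow> 'i \<Rightarrow> 'a::t1_space"
  assumes "finite A" "\<And>m k. u m k \<in> A" "\<And>k. (\<lambda>m. u m k) \<longlonglongrightarrow> v k" "finite K"
  shows "eventually (\<lambda>m. \<forall>k\<in>K. u m k = v k) sequentially"
  using assms(4)
  by (intro eventually_ball_finite ballI eventually_eq_lim_finite_range[OF assms(1)] assms(2,3))

lemma length_words: "w \<in> words N u \<Longrightarrow> length w = N"
  by (auto simp: words_def word_at_def)

lemma gap_word_le_gap: "w \<in> words N u \<Longrightarrow> gap_word w u \<le> gap N u"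
  unfolding gap_def by (rule SUP_upper)

lemma word_at_cong:
  assumes "\<And>i. i < N \<Longrightarrow> u (k + int i) = v (k + int i)"
  shows "word_at u N k = word_at v N k"
  using assms by (simp add: word_at_def)

lemma pos_near_if_gap_word_le:
  assumes "gap_word w u \<le> enat r"
  obtains k where "k \<in> pos w u" "\<bar>k - p\<bar> \<le> int r"
proof -
  have "gap_word w u < enat (Suc r)"
    using assms by (simp add: le_less_trans)
  then obtain r' where cover: "{k + j | k j. k \<in> pos w u \<and> j \<in> {- int r' .. int r'}} = UNIV"
    and "r' \<le> r"
    unfolding gap_word_def by (auto simp: INF_less_iff)
  have "p \<in> {k + j | k j. k \<in> pos w u \<and> j \<in> {- int r' .. int r'}}"
    using cover by simp
  then obtain k j where "p = k + j" "k \<in> pos w u" "j \<in> {- int r' .. int r'}"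
    by blast
  with \<open>r' \<le> r\<close> show ?thesis
    using that by auto
qed

lemma words_subset_if_agree_near_origin:
  assumes "gap N u \<le> enat g"
    and agree: "\<And>k. \<bar>k\<bar> \<le> int g + int N \<Longrightarrow> u k = v k"
  shows "words N u \<subseteq> words N v"
proof
  fix w assume w: "w \<in> words N u"
  then have "gap_word w u \<le> enat g"
    using assms(1) gap_word_le_gap order_trans by blast
  then obtain k where k: "k \<in> pos w u" "\<bar>k\<bar> \<le> int g"
    using pos_near_if_gap_word_le[where p = 0] by (metis diff_zero)
  have "w = word_at u N k"
    using k(1) length_words[OF w] by (simp add: pos_def)
  also have "\<dots> = word_at v N k"
    using k(2) by (intro word_at_cong agree) auto
  finally show "w \<in> words N v"
    by (auto simp: words_def)
qed

theorem proposition4p13: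
  fixes \<Sigma> :: "complex set" and b :: "nat \<Rightarrow> int \<Rightarrow> complex" and b_lim :: "int \<Rightarrow> complex"
  assumes "finite \<Sigma>"
    and "\<And>m k. b m k \<in> \<Sigma>"
    and "\<And>k. (\<lambda>m. b m k) \<longlonglongrightarrow> b_lim k"
    and "\<And>N. (SUP m. gap N (b m)) < \<infinity>"
  shows "\<forall>N. \<exists>m0. \<forall>m\<ge>m0. words N (b m) \<subseteq> words N b_lim"
proof
  fix N
  obtain g where g: "(SUP m. gap N (b m)) = enat g"
    using assms(4)[of N] by (cases "SUP m. gap N (b m)") auto
  define R where "R = int g + int N"
  have "eventually (\<lambda>m. \<forall>k\<in>{-R..R}. b m k = b_lim k) sequentially"
    using assms(1-3) by (rule eventually_agree_on_finite) simp
  then obtain m0 where m0: "\<And>m k. m \<ge> m0 \<Longrightarrow> k \<in> {-R..R} \<Longrightarrow> b m k = b_lim k"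
    unfolding eventually_sequentially by blast
  have "words N (b m) \<subseteq> words N b_lim" if "m \<ge> m0" for m
  proof (rule words_subset_if_agree_near_origin)
    show "gap N (b m) \<le> enat g"
      by (metis g SUP_upper UNIV_I)
    show "b m k = b_lim k" if "\<bar>k\<bar> \<le> int g + int N" for k
      using m0[OF \<open>m \<ge> m0\<close>] that by (simp add: R_def abs_le_iff)
  qed
  then show "\<exists>m0. \<forall>m\<ge>m0. words N (b m) \<subseteq> words N b_lim"
    by blast
qed

end
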